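(* Let $(b,c)$ be a locally finite, connected graph over a countable set $X$ on which $\mathbb{Z}^d$ acts freely and cocompactly such that $H_{b,c}$ is $\mathbb{Z}^d$-invariant, and fix $x_0\in X$. Let $\Lambda:\mathbb{R}^d\to(-\infty,\lambda_0]$ be the map sending $\alpha$ to the unique $\lambda$ with $\rho^{-1}(\alpha)\in\mathcal{M}_\lambda$. Then $\Lambda$ is strictly concave and continuous.
   Context: A graph over $X$ is $(b,c)$ with $b:X\times X\to[0,\infty)$, $c:X\to\mathbb{R}$, $\sum_yb(x,y)<\infty$ ($b$ need not be symmetric); locally finite and connected as usual ($x\sim y$ iff $b(x,y)>0$). $H_{b,c}f(x)=\sum_yb(x,y)(f(x)-f(y))+c(x)f(x)$ on $\mathrm{Dom}(H)=\{f:\sum_yb(x,y)|f(y)|<\infty\ \forall x\}$; $f$ is $\lambda$-harmonic if $(H-\lambda)f=0$. $T_gf(x)=f(g^{-1}x)$; $H$ is $\mathbb{Z}^d$-invariant if $T_g$ preserves $\mathrm{Dom}(H)$ and $HT_g=T_gH$. $f$ is multiplicative with character $\gamma_f$ if $\gamma_f:\mathbb{Z}^d\to(0,\infty)$ is a homomorphism with $f(zx)=\gamma_f(z)f(x)$. $\mathcal{K}_\lambda$ is the pointwise closure of $\{f\ge0,\ f\not\equiv0,\ \lambda\text{-harmonic},\ f(x_0)=1\}$, $\mathcal{M}_\lambda$ its multiplicative elements (the $\mathcal{M}_\lambda$ are pairwise disjoint), $\mathcal{M}_\mathbb{R}=\bigcup_\lambda\mathcal{M}_\lambda$. $\rho:\mathcal{M}_\mathbb{R}\to\mathbb{R}^d$,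 $\rho(f)=\alpha$ where $\log\gamma_f(z)=\langle\alpha,z\rangle$; $\rho$ is a bijection. $\lambda_0=\sup\{\lambda:\mathcal{M}_\lambda\neq\emptyset\}$. *)

theory Defs
  imports "HOL-Analysis.Analysis"
begin

definition graph :: "('x \<Rightarrow> 'x \<Rightarrow> real) \<Rightarrow> bool" where
  "graph b \<longleftrightarrow> (\<forall>x y. b x y \<ge> 0) \<and> (\<forall>x. (\<lambda>y. b x y) summable_on UNIV)"

definition locally_finite :: "('x \<Rightarrow> 'x \<Rightarrow> real) \<Rightarrow> bool" where
  "locally_finite b \<longleftrightarrow> (\<forall>x. finite {y. b x y > 0})"

definition graph_connected :: "('x \<Rightarrow> 'x \<Rightarrow> real) \<Rightarrow> bool" where
  "graph_connected b \<longleftrightarrow> (\<forall>x y. (\<lambda>u v. b u v > 0)\<^sup>*\<^sup>* x y)"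

definition domH :: "('x \<Rightarrow> 'x \<Rightarrow> real) \<Rightarrow> ('x \<Rightarrow> real) set" where
  "domH b = {f. \<forall>x. (\<lambda>y. b x y * \<bar>f y\<bar>) summable_on UNIV}"

definition opH :: "('x \<Rightarrow> 'x \<Rightarrow> real) \<Rightarrow> ('x \<Rightarrow> real) \<Rightarrow> ('x \<Rightarrow> real) \<Rightarrow> 'x \<Rightarrow> real" where
  "opH b c f x = (\<Sum>\<^sub>\<infinity>y. b x y * (f x - f y)) + c x * f x"

definition harmonic :: "('x \<Rightarrow> 'x \<Rightarrow> real) \<Rightarrow> ('x \<Rightarrow> real) \<Rightarrow> real \<Rightarrow> ('x \<Rightarrow> real) \<Rightarrow> bool" where
  "harmonic b c lam f \<longleftrightarrow> f \<in> domH b \<and> (\<forall>x. opH b c f x - lam * f x = 0)"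

definition group_action :: "(int ^ 'd \<Rightarrow> 'x \<Rightarrow> 'x) \<Rightarrow> bool" where
  "group_action act \<longleftrightarrow> (\<forall>x. act 0 x = x) \<and> (\<forall>g h x. act (g + h) x = act g (act h x))"

definition free_action :: "(int ^ 'd \<Rightarrow> 'x \<Rightarrow> 'x) \<Rightarrow> bool" where
  "free_action act \<longleftrightarrow> (\<forall>g x. act g x = x \<longrightarrow> g = 0)"

definition cocompact_action :: "(int ^ 'd \<Rightarrow> 'x \<Rightarrow> 'x) \<Rightarrow> bool" where
  "cocompact_action act \<longleftrightarrow> finite ((\<lambda>x. range (\<lambda>g. act g x)) ` UNIV)"

definition transl :: "(int ^ 'd \<Rightarrow> 'x \<Rightarrow> 'x) \<Rightarrow> int ^ 'd \<Rightarrow> ('x \<Rightarrow> real) \<Rightarrow> 'x \<Rightarrow> real" where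
  "transl act g f x = f (act (- g) x)"

definition H_invariant :: "('x \<Rightarrow> 'x \<Rightarrow> real) \<Rightarrow> ('x \<Rightarrow> real) \<Rightarrow> (int ^ 'd \<Rightarrow> 'x \<Rightarrow> 'x) \<Rightarrow> bool" where
  "H_invariant b c act \<longleftrightarrow>
     (\<forall>g. \<forall>f \<in> domH b. transl act g f \<in> domH b \<and> opH b c (transl act g f) = transl act g (opH b c f))"

text \<open>The cone K_lambda (pointwise = product-topology closure) and multiplicative elements.\<close>

definition Kset :: "('x \<Rightarrow> 'x \<Rightarrow> real) \<Rightarrow> ('x \<Rightarrow> real) \<Rightarrow> 'x \<Rightarrow> real \<Rightarrow> ('x \<Rightarrow> real) set" where
  "Kset b c x0 lam = closure {f. (\<forall>x. f x \<ge> 0) \<and> f \<noteq> (\<lambda>_. 0) \<and> harmonic b c lam f \<and> f x0 = 1}"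

definition is_character :: "(int ^ 'd \<Rightarrow> real) \<Rightarrow> bool" where
  "is_character \<gamma> \<longleftrightarrow> (\<forall>z. \<gamma> z > 0) \<and> (\<forall>z w. \<gamma> (z + w) = \<gamma> z * \<gamma> w)"

definition mult_with :: "(int ^ 'd \<Rightarrow> 'x \<Rightarrow> 'x) \<Rightarrow> (int ^ 'd \<Rightarrow> real) \<Rightarrow> ('x \<Rightarrow> real) \<Rightarrow> bool" where
  "mult_with act \<gamma> f \<longleftrightarrow> is_character \<gamma> \<and> (\<forall>z x. f (act z x) = \<gamma> z * f x)"

definition multiplicative :: "(int ^ 'd \<Rightarrow> 'x \<Rightarrow> 'x) \<Rightarrow> ('x \<Rightarrow> real) \<Rightarrow> bool" where
  "multiplicative act f \<longleftrightarrow> (\<exists>\<gamma>. mult_with act \<gamma> f)"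

definition char_of :: "(int ^ 'd \<Rightarrow> 'x \<Rightarrow> 'x) \<Rightarrow> ('x \<Rightarrow> real) \<Rightarrow> int ^ 'd \<Rightarrow> real" where
  "char_of act f = (THE \<gamma>. mult_with act \<gamma> f)"

definition Mset :: "('x \<Rightarrow> 'x \<Rightarrow> real) \<Rightarrow> ('x \<Rightarrow> real) \<Rightarrow> (int ^ 'd \<Rightarrow> 'x \<Rightarrow> 'x) \<Rightarrow> 'x \<Rightarrow> real \<Rightarrow> ('x \<Rightarrow> real) set" where
  "Mset b c act x0 lam = {f \<in> Kset b c x0 lam. multiplicative act f}"

definition pair_Zd :: "real ^ 'd \<Rightarrow> int ^ 'd \<Rightarrow> real" where
  "pair_Zd \<alpha> z = (\<Sum>i\<in>UNIV. \<alpha> $ i * real_of_int (z $ i))"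

definition rho :: "(int ^ 'd \<Rightarrow> 'x \<Rightarrow> 'x) \<Rightarrow> ('x \<Rightarrow> real) \<Rightarrow> real ^ 'd" where
  "rho act f = (THE \<alpha>. \<forall>z. ln (char_of act f z) = pair_Zd \<alpha> z)"

definition Lam :: "('x \<Rightarrow> 'x \<Rightarrow> real) \<Rightarrow> ('x \<Rightarrow> real) \<Rightarrow> (int ^ 'd \<Rightarrow> 'x \<Rightarrow> 'x) \<Rightarrow> 'x \<Rightarrow> real ^ 'd \<Rightarrow> real" where
  "Lam b c act x0 \<alpha> = (THE lam. \<exists>f \<in> Mset b c act x0 lam. rho act f = \<alpha>)"

definition strictly_concave_on :: "'a::real_vector set \<Rightarrow> ('a \<Rightarrow> real) \<Rightarrow> bool" where
  "strictly_concave_on S F \<longleftrightarrow>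
     (\<forall>x\<in>S. \<forall>y\<in>S. \<forall>t::real. x \<noteq> y \<and> 0 < t \<and> t < 1 \<longrightarrow>
        F ((1 - t) *\<^sub>R x + t *\<^sub>R y) > (1 - t) * F x + t * F y)"

end

theory Submission
  imports Defs
begin

text \<open>Call f \<alpha>-multiplicative if f(z x) = exp \<langle>\<alpha>, z\<rangle> f(x). Such functions are
  determined by their values on a finite fundamental domain, on which the nonnegative operator
  shift - H acts irreducibly because the graph is connected; a Collatz-Wielandt maximisation
  gives a positive \<alpha>-multiplicative eigenfunction of H, and comparison through the strong
  minimum principle shows that all positive \<alpha>-multiplicative eigenfunctions share its eigenvalue,
  which is therefore \<Lambda>(\<alpha>).

  For \<alpha> \<noteq> \<beta> and 0 < t < 1, weighted AM-GM along every edge makes the geometric mean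
  f_\<alpha>^(1-t) f_\<beta>^t of the eigenfunctions a positive supersolution,
  H g \<ge> ((1-t) \<Lambda>(\<alpha>) + t \<Lambda>(\<beta>)) g, in the class (1-t) \<alpha> + t \<beta>. Comparison with
  the eigenfunction of that class bounds the constant by \<Lambda>((1-t) \<alpha> + t \<beta>), and equality
  would force f_\<alpha> / f_\<beta> to be constant along edges, hence \<alpha> = \<beta>. Concave
  functions on \<real>^d are continuous.\<close>

lemma powr_convex_comb_less:
  fixes a d t :: real
  assumes "0 < a" "0 < d" "a \<noteq> d" "0 < t" "t < 1"
  shows "a powr (1 - t) * d powr t < (1 - t) * a + t * d"
proof -
  define p q where "p = sqrt a" and "q = sqrt d"
  have pq: "0 < p" "0 < q" "p \<noteq> q" and a: "a = p * p" and d: "d = q * q"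
    using assms by (auto simp: p_def q_def)
  text \<open>Square the weak inequality for the square roots: squaring a convex combination
    loses exactly t(1-t)(p-q)^2.\<close>
  have le: "p powr (1 - t) * q powr t \<le> (1 - t) * p + t * q"
    using Youngs_inequality_0[of "1 - t" t p q] pq assms by simp
  have nonneg: "0 \<le> p powr (1 - t) * q powr t"
    by simp
  have "a powr (1 - t) * d powr t = (p powr (1 - t) * q powr t) * (p powr (1 - t) * q powr t)"
    using pq by (simp add: a d powr_mult algebra_simps)
  also have "\<dots> \<le> ((1 - t) * p + t * q) * ((1 - t) * p + t * q)"
    by (rule mult_mono[OF le le]) (use le nonneg in linarith)+
  also have "\<dots> < (1 - t) * a + t * d"
  proof -
    have "0 < (p - q) * (p - q)"
      using pq(3) by (cases "p < q") (auto simp: zero_less_mult_iff)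
    then have "0 < t * (1 - t) * ((p - q) * (p - q))"
      using assms by simp
    moreover have "(1 - t) * a + t * d - ((1 - t) * p + t * q) * ((1 - t) * p + t * q)
        = t * (1 - t) * ((p - q) * (p - q))"
      unfolding a d by (simp add: algebra_simps)
    ultimately show ?thesis by linarith
  qed
  finally show ?thesis .
qed

lemma continuous_on_Min_image:
  fixes f :: "'i \<Rightarrow> 'a::topological_space \<Rightarrow> real"
  assumes "finite A" "A \<noteq> {}" "\<And>i. i \<in> A \<Longrightarrow> continuous_on S (f i)"
  shows "continuous_on S (\<lambda>g. Min ((\<lambda>i. f i g) ` A))"
  using assms
proof (induction A rule: finite_ne_induct)
  case (insert x A)
  have "continuous_on S (\<lambda>g. min (f x g) (Min ((\<lambda>i. f i g) ` A)))"
    using insert by (intro continuous_on_min) auto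
  moreover have "(\<lambda>g. Min ((\<lambda>i. f i g) ` insert x A)) = (\<lambda>g. min (f x g) (Min ((\<lambda>i. f i g) ` A)))"
    using insert by (simp add: fun_eq_iff Min_insert)
  ultimately show ?case by (simp only:)
qed simp

lemma strictly_concave_on_imp_continuous:
  fixes F :: "'a::euclidean_space \<Rightarrow> real"
  assumes "strictly_concave_on UNIV F"
  shows "continuous_on UNIV F"
proof -
  have "convex_on UNIV (\<lambda>x. - F x)"
  proof (rule convex_onI)
    fix t :: real and x y :: 'a
    assume t: "0 < t" "t < 1"
    show "- F ((1 - t) *\<^sub>R x + t *\<^sub>R y) \<le> (1 - t) * - F x + t * - F y"
    proof (cases "x = y")
      case True
      then show ?thesis by (simp add: algebra_simps flip: scaleR_add_left)
    next
      case False
      then have "(1 - t) * F x + t * F y < F ((1 - t) *\<^sub>R x + t *\<^sub>R y)"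
        using assms t unfolding strictly_concave_on_def by blast
      then show ?thesis by simp
    qed
  qed simp
  then have "continuous_on UNIV (\<lambda>x. - (- F x))"
    by (intro continuous_on_minus convex_on_continuous) auto
  then show ?thesis by simp
qed

lemma pair_Zd_add: "pair_Zd \<alpha> (z + w) = pair_Zd \<alpha> z + pair_Zd \<alpha> w"
  by (simp add: pair_Zd_def sum.distrib distrib_left)

lemma pair_Zd_convex_comb:
  "pair_Zd ((1 - t) *\<^sub>R \<alpha> + t *\<^sub>R \<beta>) z = (1 - t) * pair_Zd \<alpha> z + t * pair_Zd \<beta> z"
proof -
  have "pair_Zd ((1 - t) *\<^sub>R \<alpha> + t *\<^sub>R \<beta>) z =
     (\<Sum>i\<in>UNIV. (1 - t) * (\<alpha> $ i * real_of_int (z $ i)) + t * (\<beta> $ i * real_of_int (z $ i)))"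
    unfolding pair_Zd_def by (rule sum.cong) (simp_all add: algebra_simps)
  then show ?thesis
    by (simp add: pair_Zd_def sum.distrib sum_distrib_left)
qed

lemma pair_Zd_axis: "pair_Zd \<alpha> (axis i 1) = \<alpha> $ i"
  by (simp add: pair_Zd_def axis_def if_distrib cong: if_cong)

lemma pair_Zd_inject: "(\<And>z. pair_Zd \<alpha> z = pair_Zd \<beta> z) \<Longrightarrow> \<alpha> = \<beta>"
  by (metis pair_Zd_axis vec_eq_iff)

lemma additive_axis:
  fixes L :: "int ^ 'd \<Rightarrow> real"
  assumes "Modules.additive L"
  shows "L (axis i k) = of_int k * L (axis i 1)"
proof (induction k rule: int_induct[where k = 0])
  case base
  show ?case using additive.zero[OF assms] by (simp add: axis_def zero_vec_def)
next
  case (step1 j)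
  have "L (axis i (j + 1)) = L (axis i j + axis i 1)"
    by (rule arg_cong[where f = L]) (simp add: axis_def vec_eq_iff)
  also have "\<dots> = L (axis i j) + L (axis i 1)" by (rule additive.add[OF assms])
  finally show ?case using step1(2) by (simp add: algebra_simps)
next
  case (step2 j)
  have "L (axis i (j - 1)) = L (axis i j - axis i 1)"
    by (rule arg_cong[where f = L]) (simp add: axis_def vec_eq_iff)
  also have "\<dots> = L (axis i j) - L (axis i 1)" by (rule additive.diff[OF assms])
  finally show ?case using step2(2) by (simp add: algebra_simps)
qed

lemma additive_eq_pair_Zd:
  fixes L :: "int ^ 'd \<Rightarrow> real"
  assumes "Modules.additive L"
  shows "L z = pair_Zd (\<chi> i. L (axis i 1)) z"
proof -
  have "(\<Sum>i\<in>UNIV. axis i (z $ i)) = z"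
    by (simp add: vec_eq_iff axis_def if_distrib cong: if_cong)
  then have "L z = L (\<Sum>i\<in>UNIV. axis i (z $ i))" by (simp only:)
  also have "\<dots> = (\<Sum>i\<in>UNIV. L (axis i (z $ i)))" by (rule additive.sum[OF assms])
  also have "\<dots> = (\<Sum>i\<in>UNIV. of_int (z $ i) * L (axis i 1))"
    by (rule sum.cong[OF refl]) (rule additive_axis[OF assms])
  finally show ?thesis by (simp add: pair_Zd_def mult.commute)
qed

lemma character_ln_eq_pair_Zd:
  fixes \<gamma> :: "int ^ 'd \<Rightarrow> real"
  assumes "is_character \<gamma>"
  shows "\<exists>\<alpha>. \<forall>z. ln (\<gamma> z) = pair_Zd \<alpha> z"
proof -
  have "Modules.additive (\<lambda>z. ln (\<gamma> z))"
  proof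
    fix z w
    have "\<gamma> (z + w) = \<gamma> z * \<gamma> w" "0 < \<gamma> z" "0 < \<gamma> w"
      using assms by (auto simp: is_character_def)
    then show "ln (\<gamma> (z + w)) = ln (\<gamma> z) + ln (\<gamma> w)" by (simp add: ln_mult)
  qed
  then show ?thesis by (blast dest: additive_eq_pair_Zd)
qed

section \<open>The operator H on a periodic graph\<close>

locale periodic_graph =
  fixes b :: "'x \<Rightarrow> 'x \<Rightarrow> real" and c :: "'x \<Rightarrow> real"
    and act :: "int ^ 'd \<Rightarrow> 'x \<Rightarrow> 'x" and x0 :: 'x
  assumes graph: "graph b" and locally_finite: "locally_finite b"
    and connected: "graph_connected b"
    and action: "group_action act" and free: "free_action act"
    and cocompact: "cocompact_action act" and invariant: "H_invariant b c act"
begin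

definition nbrs :: "'x \<Rightarrow> 'x set" where
  "nbrs x = {y. y \<noteq> x \<and> 0 < b x y}"

definition diag :: "'x \<Rightarrow> real" where
  "diag x = (\<Sum>y\<in>nbrs x. b x y) + c x"

lemma b_nonneg: "0 \<le> b x y"
  using graph by (auto simp: graph_def)

lemma finite_nbrs: "finite (nbrs x)"
proof -
  have "finite {y. 0 < b x y}"
    using locally_finite by (auto simp: locally_finite_def)
  then show ?thesis
    unfolding nbrs_def by (rule rev_finite_subset) auto
qed

lemma b_eq_0_if_not_nbr: "y \<notin> nbrs x \<Longrightarrow> y \<noteq> x \<Longrightarrow> b x y = 0"
  using b_nonneg[of x y] by (auto simp: nbrs_def)

lemma opH_eq: "opH b c f x = diag x * f x - (\<Sum>y\<in>nbrs x. b x y * f y)"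
proof -
  have "(\<Sum>\<^sub>\<infinity>y. b x y * (f x - f y)) = (\<Sum>\<^sub>\<infinity>y\<in>nbrs x. b x y * (f x - f y))"
    by (rule infsum_cong_neutral) (use b_eq_0_if_not_nbr in fastforce)+
  also have "\<dots> = (\<Sum>y\<in>nbrs x. b x y) * f x - (\<Sum>y\<in>nbrs x. b x y * f y)"
    using finite_nbrs by (simp add: right_diff_distrib sum_subtractf sum_distrib_right)
  finally show ?thesis
    by (simp add: opH_def diag_def algebra_simps)
qed

lemma in_domH: "f \<in> domH b"
  unfolding domH_def
proof (intro CollectI allI)
  fix x
  have "(\<lambda>y. b x y * \<bar>f y\<bar>) summable_on UNIV \<longleftrightarrow>
        (\<lambda>y. b x y * \<bar>f y\<bar>) summable_on (insert x (nbrs x))"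
    by (rule summable_on_cong_neutral) (auto simp: b_eq_0_if_not_nbr)
  then show "(\<lambda>y. b x y * \<bar>f y\<bar>) summable_on UNIV"
    using finite_nbrs by simp
qed

lemma opH_lincomb:
  "opH b c (\<lambda>x. a * g x + d * h x) x = a * opH b c g x + d * opH b c h x"
  by (simp add: opH_eq sum.distrib sum_distrib_left algebra_simps)

lemma sum_nbrs_eigen:
  "opH b c f x = L * f x \<Longrightarrow> (\<Sum>y\<in>nbrs x. b x y * f y) = (diag x - L) * f x"
  by (simp add: opH_eq algebra_simps)

lemma connected_induct:
  assumes "P x" and "\<And>u v. P u \<Longrightarrow> v \<in> nbrs u \<Longrightarrow> P v"
  shows "P y"
proof -
  have "(\<lambda>u v. 0 < b u v)\<^sup>*\<^sup>* x y"
    using connected by (simp add: graph_connected_def)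
  then show ?thesis
  proof (induction rule: rtranclp_induct)
    case (step u v)
    then show ?case
      using assms(2)[of u v] by (cases "v = u") (auto simp: nbrs_def)
  qed (rule assms(1))
qed

lemma opH_nonpos_at_zero: "(\<And>y. 0 \<le> h y) \<Longrightarrow> h x = 0 \<Longrightarrow> opH b c h x \<le> 0"
  by (simp add: opH_eq sum_nonneg b_nonneg)

lemma strong_minimum_principle:
  assumes nonneg: "\<And>y. 0 \<le> h y" and "h x = 0"
    and super: "\<And>u. h u = 0 \<Longrightarrow> 0 \<le> opH b c h u"
  shows "h y = 0"
proof (rule connected_induct[of "\<lambda>u. h u = 0", OF \<open>h x = 0\<close>])
  fix u v assume u: "h u = 0" and v: "v \<in> nbrs u"
  have "(\<Sum>y\<in>nbrs u. b u y * h y) \<le> 0"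
    using super[OF u] by (simp add: opH_eq u)
  moreover have "0 \<le> (\<Sum>y\<in>nbrs u. b u y * h y)"
    by (simp add: sum_nonneg b_nonneg nonneg)
  moreover have "(\<Sum>y\<in>nbrs u. b u y * h y) = 0 \<longleftrightarrow> (\<forall>y\<in>nbrs u. b u y * h y = 0)"
    by (rule sum_nonneg_eq_0_iff[OF finite_nbrs]) (simp add: nonneg b_nonneg)
  ultimately have "\<forall>y\<in>nbrs u. b u y * h y = 0" by simp
  then show "h v = 0"
    using v by (simp add: nbrs_def)
qed

lemma act_zero [simp]: "act 0 x = x"
  using action by (simp add: group_action_def)

lemma act_add: "act (g + h) x = act g (act h x)"
  using action by (simp add: group_action_def)

lemma act_neg_act [simp]: "act (- g) (act g x) = x"
  by (metis act_zero act_add add.commute add.right_inverse)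

lemma act_act_neg [simp]: "act g (act (- g) x) = x"
  by (metis act_neg_act minus_minus)

lemma act_eq_iff: "act g x = act g y \<longleftrightarrow> x = y"
  by (metis act_neg_act)

lemma act_eq_imp_eq: "act z x = act z' x \<Longrightarrow> z = z'"
proof -
  assume "act z x = act z' x"
  then have "act (- z' + z) x = x" by (metis act_add act_neg_act)
  then have "- z' + z = 0" using free by (auto simp: free_action_def)
  then show ?thesis by (simp add: algebra_simps)
qed

definition unit_fun :: "'x \<Rightarrow> 'x \<Rightarrow> real" where
  "unit_fun y w = (if w = y then 1 else 0)"

text \<open>Evaluating H on unit functions recovers b and diag, so the invariance of H
  passes to them.\<close>

lemma opH_unit_fun: "opH b c (unit_fun y) x = (if x = y then diag x else - b x y)"
proof -
  have "(\<Sum>w\<in>nbrs x. b x w * unit_fun y w) = (\<Sum>w\<in>nbrs x. if w = y then b x w else 0)"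
    by (rule sum.cong) (auto simp: unit_fun_def)
  also have "\<dots> = (if y \<in> nbrs x then b x y else 0)"
    using finite_nbrs by simp
  finally show ?thesis
    using b_eq_0_if_not_nbr[of y x] by (auto simp: opH_eq unit_fun_def nbrs_def)
qed

lemma opH_unit_fun_act: "opH b c (unit_fun (act g y)) (act g x) = opH b c (unit_fun y) x"
proof -
  have "transl act g (unit_fun y) = unit_fun (act g y)"
    by (auto simp: transl_def unit_fun_def fun_eq_iff)
  moreover have "opH b c (transl act g (unit_fun y)) = transl act g (opH b c (unit_fun y))"
    using invariant in_domH by (auto simp: H_invariant_def)
  ultimately show ?thesis
    by (metis transl_def act_neg_act)
qed

lemma b_act: "x \<noteq> y \<Longrightarrow> b (act g x) (act g y) = b x y"
  using opH_unit_fun_act[of g y x] by (simp add: opH_unit_fun act_eq_iff)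

lemma diag_act: "diag (act g x) = diag x"
  using opH_unit_fun_act[of g x x] by (simp add: opH_unit_fun)

lemma nbrs_act: "nbrs (act g x) = act g ` nbrs x"
proof
  show "nbrs (act g x) \<subseteq> act g ` nbrs x"
  proof
    fix y assume y: "y \<in> nbrs (act g x)"
    then have "act (- g) y \<noteq> x" by (auto simp: nbrs_def)
    then have "act (- g) y \<in> nbrs x"
      using y b_act[of x "act (- g) y" g] by (simp add: nbrs_def)
    then show "y \<in> act g ` nbrs x" by (metis act_act_neg image_eqI)
  qed
qed (auto simp: nbrs_def b_act act_eq_iff)

definition orbit :: "'x \<Rightarrow> 'x set" where
  "orbit x = range (\<lambda>g. act g x)"

definition orbit_rep :: "'x \<Rightarrow> 'x" where
  "orbit_rep x = (SOME y. y \<in> orbit x)"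

definition orbit_coord :: "'x \<Rightarrow> int ^ 'd" where
  "orbit_coord x = (SOME z. act z (orbit_rep x) = x)"

definition fund_dom :: "'x set" where
  "fund_dom = range orbit_rep"

lemma orbit_act: "orbit (act g x) = orbit x"
proof
  show "orbit (act g x) \<subseteq> orbit x"
    unfolding orbit_def by (auto simp flip: act_add)
  have "act h x = act (h - g) (act g x)" for h
    by (metis act_add diff_add_cancel)
  then show "orbit x \<subseteq> orbit (act g x)"
    unfolding orbit_def by blast
qed

lemma orbit_rep_in_orbit: "orbit_rep x \<in> orbit x"
  unfolding orbit_rep_def orbit_def by (rule someI[of _ x], rule range_eqI[where x = 0]) simp

lemma orbit_rep_act: "orbit_rep (act g x) = orbit_rep x"
  by (simp add: orbit_rep_def orbit_act)

lemma act_orbit_coord: "act (orbit_coord x) (orbit_rep x) = x"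
proof -
  obtain g where "orbit_rep x = act g x"
    using orbit_rep_in_orbit by (auto simp: orbit_def)
  then have "act (- g) (orbit_rep x) = x" by simp
  then show ?thesis
    unfolding orbit_coord_def by (rule someI)
qed

lemma orbit_coord_act: "orbit_coord (act w x) = w + orbit_coord x"
proof -
  have "act (orbit_coord (act w x)) (orbit_rep x) = act w x"
    using act_orbit_coord[of "act w x"] by (simp add: orbit_rep_act)
  also have "\<dots> = act (w + orbit_coord x) (orbit_rep x)"
    by (simp add: act_add act_orbit_coord)
  finally show ?thesis by (rule act_eq_imp_eq)
qed

lemma orbit_rep_in_fund_dom: "orbit_rep x \<in> fund_dom"
  by (simp add: fund_dom_def)

lemma finite_fund_dom: "finite fund_dom"
proof -
  have "fund_dom = (\<lambda>S. SOME y. y \<in> S) ` range orbit"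
    by (auto simp: fund_dom_def orbit_rep_def)
  moreover have "finite (range orbit)"
    using cocompact by (simp add: cocompact_action_def orbit_def)
  ultimately show ?thesis by simp
qed

lemma fund_dom_nonempty: "fund_dom \<noteq> {}"
  by (simp add: fund_dom_def)

lemma diag_le_Max: "diag x \<le> Max (diag ` fund_dom)"
proof -
  have "diag x = diag (orbit_rep x)"
    by (metis diag_act act_orbit_coord)
  then show ?thesis
    using finite_fund_dom orbit_rep_in_fund_dom by auto
qed

section \<open>Multiplicative functions and comparison\<close>

definition Mult :: "real ^ 'd \<Rightarrow> ('x \<Rightarrow> real) set" where
  "Mult \<alpha> = {g. \<forall>z x. g (act z x) = exp (pair_Zd \<alpha> z) * g x}"

lemma Mult_orbit_rep: "g \<in> Mult \<alpha> \<Longrightarrow> g x = exp (pair_Zd \<alpha> (orbit_coord x)) * g (orbit_rep x)"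
  unfolding Mult_def by (metis (mono_tags, lifting) mem_Collect_eq act_orbit_coord)

lemma Mult_nonneg: "g \<in> Mult \<alpha> \<Longrightarrow> (\<And>y. y \<in> fund_dom \<Longrightarrow> 0 \<le> g y) \<Longrightarrow> 0 \<le> g x"
  using Mult_orbit_rep[of g \<alpha> x] orbit_rep_in_fund_dom[of x] by simp

lemma Mult_pos: "g \<in> Mult \<alpha> \<Longrightarrow> (\<And>y. y \<in> fund_dom \<Longrightarrow> 0 < g y) \<Longrightarrow> 0 < g x"
  using Mult_orbit_rep[of g \<alpha> x] orbit_rep_in_fund_dom[of x] by simp

lemma Mult_zero: "g \<in> Mult \<alpha> \<Longrightarrow> (\<And>y. y \<in> fund_dom \<Longrightarrow> g y = 0) \<Longrightarrow> g x = 0"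
  using Mult_orbit_rep[of g \<alpha> x] orbit_rep_in_fund_dom[of x] by simp

lemma Mult_lincomb: "g \<in> Mult \<alpha> \<Longrightarrow> h \<in> Mult \<alpha> \<Longrightarrow> (\<lambda>x. a * g x + d * h x) \<in> Mult \<alpha>"
  by (simp add: Mult_def algebra_simps)

lemma Mult_scale: "g \<in> Mult \<alpha> \<Longrightarrow> (\<lambda>x. a * g x) \<in> Mult \<alpha>"
  by (simp add: Mult_def algebra_simps)

lemma closed_Mult: "closed (Mult \<alpha>)"
  unfolding Mult_def
  by (intro closed_Collect_all closed_Collect_eq continuous_on_mult_left
      continuous_on_product_coordinates)

text \<open>The ratio g/f is invariant, so t = min g/f is attained on the fundamental domain and
  \<psi> = g - t f \<ge> 0 vanishes somewhere. At such a zero (\<mu> - L) g \<le> H \<psi> \<le> 0, and for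
  \<mu> = L the strong minimum principle forces \<psi> = 0.\<close>

lemma Mult_supersolution_le_eigenvalue:
  assumes fM: "f \<in> Mult \<alpha>" and gM: "g \<in> Mult \<alpha>" and fpos: "\<And>x. 0 < f x" and gpos: "\<And>x. 0 < g x"
    and f_eigen: "\<And>x. opH b c f x = L * f x" and g_super: "\<And>x. \<mu> * g x \<le> opH b c g x"
  shows "\<mu> \<le> L" and "\<mu> = L \<Longrightarrow> opH b c g x = \<mu> * g x"
proof -
  define t where "t = Min ((\<lambda>x. g x / f x) ` fund_dom)"
  have "t \<in> (\<lambda>x. g x / f x) ` fund_dom"
    unfolding t_def by (rule Min_in) (use finite_fund_dom fund_dom_nonempty in auto)
  then obtain x1 where x1: "x1 \<in> fund_dom" "t = g x1 / f x1" by blast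
  define \<psi> where "\<psi> x = g x - t * f x" for x
  have \<psi>M: "\<psi> \<in> Mult \<alpha>"
    using Mult_lincomb[OF gM fM, of 1 "- t"] by (simp add: \<psi>_def[abs_def])
  have \<psi>_nonneg: "0 \<le> \<psi> x" for x
  proof (rule Mult_nonneg[OF \<psi>M])
    fix y assume "y \<in> fund_dom"
    then have "t \<le> g y / f y"
      unfolding t_def using finite_fund_dom by simp
    then show "0 \<le> \<psi> y"
      using fpos[of y] by (simp add: \<psi>_def pos_le_divide_eq)
  qed
  have \<psi>_x1: "\<psi> x1 = 0"
    using x1 fpos[of x1] by (simp add: \<psi>_def)
  have opH_\<psi>: "opH b c \<psi> x = opH b c g x - t * opH b c f x" for x
    using opH_lincomb[of 1 g "- t" f x] by (simp add: \<psi>_def[abs_def])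
  have at_zero: "(\<mu> - L) * g x \<le> opH b c \<psi> x" if "\<psi> x = 0" for x
    using that g_super[of x] f_eigen[of x] by (simp add: opH_\<psi> \<psi>_def algebra_simps)
  have "(\<mu> - L) * g x1 \<le> 0"
    using at_zero[OF \<psi>_x1] opH_nonpos_at_zero[of \<psi> x1, OF \<psi>_nonneg \<psi>_x1] by linarith
  then show "\<mu> \<le> L"
    using gpos[of x1] by (simp add: mult_le_0_iff)
  assume "\<mu> = L"
  then have "\<psi> y = 0" for y
    using strong_minimum_principle[of \<psi> x1 y, OF \<psi>_nonneg \<psi>_x1] at_zero by auto
  then have "opH b c \<psi> x = 0" and "g x = t * f x"
    by (simp add: opH_eq, metis \<psi>_def eq_iff_diff_eq_0)
  then show "opH b c g x = \<mu> * g x"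
    using f_eigen[of x] \<open>\<mu> = L\<close> by (simp add: opH_\<psi>)
qed

lemma nonneg_eigenfunction_pos:
  assumes nonneg: "\<And>x. 0 \<le> f x" and "f x0 = 1" and eigen: "\<And>x. opH b c f x = L * f x"
  shows "0 < f x"
proof (rule ccontr)
  assume "\<not> 0 < f x"
  then have "f x = 0" using nonneg[of x] by simp
  then have "f x0 = 0"
    by (rule strong_minimum_principle[of f x x0, OF nonneg]) (simp add: eigen)
  then show False using \<open>f x0 = 1\<close> by simp
qed

section \<open>Positive multiplicative eigenfunctions\<close>

text \<open>The shift is chosen so that T = shift - H is a nonnegative operator dominating the
  identity on nonnegative functions.\<close>

definition shift :: real where
  "shift = 1 + Max (diag ` fund_dom)"

definition T :: "('x \<Rightarrow> real) \<Rightarrow> 'x \<Rightarrow> real" where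
  "T g x = (shift - diag x) * g x + (\<Sum>y\<in>nbrs x. b x y * g y)"

lemma one_le_shift_minus_diag: "1 \<le> shift - diag x"
  using diag_le_Max[of x] by (simp add: shift_def)

lemma opH_eq_shift_minus_T: "opH b c g x = shift * g x - T g x"
  by (simp add: opH_eq T_def algebra_simps)

lemma T_Mult:
  assumes "g \<in> Mult \<alpha>"
  shows "T g \<in> Mult \<alpha>"
proof -
  have g: "g (act z y) = exp (pair_Zd \<alpha> z) * g y" for z y
    using assms by (simp add: Mult_def)
  have "T g (act z x) = exp (pair_Zd \<alpha> z) * T g x" for z x
  proof -
    have "(\<Sum>y\<in>nbrs (act z x). b (act z x) y * g y) =
          (\<Sum>y\<in>nbrs x. b (act z x) (act z y) * g (act z y))"
      unfolding nbrs_act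
      by (rule sum.reindex_cong[where l = "act z"]) (auto simp: inj_on_def act_eq_iff)
    also have "\<dots> = exp (pair_Zd \<alpha> z) * (\<Sum>y\<in>nbrs x. b x y * g y)"
      by (auto simp: sum_distrib_left nbrs_def b_act g mult.left_commute intro: sum.cong)
    finally show ?thesis
      by (simp add: T_def diag_act g algebra_simps)
  qed
  then show ?thesis
    by (simp add: Mult_def)
qed

lemma T_pow_Mult: "g \<in> Mult \<alpha> \<Longrightarrow> (T ^^ k) g \<in> Mult \<alpha>"
  by (induction k) (simp_all add: T_Mult)

lemma T_pow_lincomb:
  "(T ^^ k) (\<lambda>x. a * g x + d * h x) = (\<lambda>x. a * (T ^^ k) g x + d * (T ^^ k) h x)"
proof (induction k)
  case (Suc k)
  then show ?case
    by (simp add: fun_eq_iff T_def sum.distrib sum_distrib_left algebra_simps)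
qed simp

lemma T_pow_scale: "(T ^^ k) (\<lambda>x. a * g x) = (\<lambda>x. a * (T ^^ k) g x)"
  using T_pow_lincomb[of k a g 0 g] by simp

lemma T_ge_self:
  assumes "\<And>u. 0 \<le> w u"
  shows "w x \<le> T w x"
proof -
  have "w x \<le> (shift - diag x) * w x"
    using one_le_shift_minus_diag[of x] assms mult_right_mono[of 1 "shift - diag x" "w x"] by simp
  moreover have "0 \<le> (\<Sum>y\<in>nbrs x. b x y * w y)"
    using assms by (simp add: sum_nonneg b_nonneg)
  ultimately show ?thesis by (simp add: T_def)
qed

lemma T_nonneg: "(\<And>u. 0 \<le> w u) \<Longrightarrow> 0 \<le> T w x"
  by (meson T_ge_self order_trans)

lemma T_ge_nbr:
  assumes "\<And>u. 0 \<le> w u" and "y \<in> nbrs x"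
  shows "b x y * w y \<le> T w x"
proof -
  have "b x y * w y \<le> (\<Sum>y\<in>nbrs x. b x y * w y)"
    by (rule member_le_sum) (use assms finite_nbrs b_nonneg in auto)
  moreover have "0 \<le> (shift - diag x) * w x"
    using one_le_shift_minus_diag[of x] assms by simp
  ultimately show ?thesis by (simp add: T_def)
qed

lemma T_pow_nonneg: "(\<And>u. 0 \<le> w u) \<Longrightarrow> 0 \<le> (T ^^ k) w x"
proof (induction k arbitrary: x)
  case (Suc k)
  then have "\<And>u. 0 \<le> (T ^^ k) w u" by blast
  then show ?case by (simp add: T_nonneg)
qed simp

lemma T_pow_mono:
  assumes "\<And>u. 0 \<le> w u" and "k \<le> m"
  shows "(T ^^ k) w x \<le> (T ^^ m) w x"
  using \<open>k \<le> m\<close>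
proof (induction m rule: dec_induct)
  case (step m)
  have "(T ^^ m) w x \<le> T ((T ^^ m) w) x"
    by (rule T_ge_self) (rule T_pow_nonneg[OF assms(1)])
  then show ?case using step.IH by simp
qed simp

lemma T_pow_pos_if_path:
  assumes "(\<lambda>u v. 0 < b u v)\<^sup>*\<^sup>* x y"
  shows "\<exists>k. \<forall>w. (\<forall>u. 0 \<le> w u) \<longrightarrow> 0 < w y \<longrightarrow> 0 < (T ^^ k) w x"
  using assms
proof (induction rule: converse_rtranclp_induct)
  case base
  show ?case by (rule exI[of _ 0]) simp
next
  case (step x x')
  then obtain k where k: "\<forall>w. (\<forall>u. 0 \<le> w u) \<longrightarrow> 0 < w y \<longrightarrow> 0 < (T ^^ k) w x'"
    by blast
  show ?case
  proof (cases "x = x'")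
    case False
    then have x': "x' \<in> nbrs x" using step by (simp add: nbrs_def)
    show ?thesis
    proof (intro exI[of _ "Suc k"] allI impI)
      fix w :: "'x \<Rightarrow> real" assume w: "\<forall>u. 0 \<le> w u" "0 < w y"
      have "0 < b x x' * (T ^^ k) w x'"
        using k w x' by (simp add: nbrs_def)
      also have "\<dots> \<le> (T ^^ Suc k) w x"
        using T_ge_nbr[OF _ x', of "(T ^^ k) w"] T_pow_nonneg w by auto
      finally show "0 < (T ^^ Suc k) w x" .
    qed
  qed (use k in blast)
qed

definition positivity_index :: "nat \<Rightarrow> bool" where
  "positivity_index K \<longleftrightarrow> (\<forall>w. (\<forall>u. 0 \<le> w u) \<longrightarrow> (\<exists>y\<in>fund_dom. 0 < w y) \<longrightarrow>
     (\<forall>x\<in>fund_dom. 0 < (T ^^ K) w x))"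

lemma positivity_indexD:
  assumes "positivity_index K" "\<And>u. 0 \<le> w u" "y \<in> fund_dom" "0 < w y" "x \<in> fund_dom"
  shows "0 < (T ^^ K) w x"
  using assms unfolding positivity_index_def by blast

lemma ex_positivity_index: "\<exists>K. positivity_index K"
proof -
  define k where "k x y = (SOME k. \<forall>w. (\<forall>u. 0 \<le> w u) \<longrightarrow> 0 < w y \<longrightarrow> 0 < (T ^^ k) w x)"
    for x y
  have k: "\<forall>w. (\<forall>u. 0 \<le> w u) \<longrightarrow> 0 < w y \<longrightarrow> 0 < (T ^^ k x y) w x" for x y
    unfolding k_def by (rule someI_ex, rule T_pow_pos_if_path)
      (use connected in \<open>simp add: graph_connected_def\<close>)
  define K where "K = Max ((\<lambda>(x, y). k x y) ` (fund_dom \<times> fund_dom))"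
  have k_le: "k x y \<le> K" if "x \<in> fund_dom" "y \<in> fund_dom" for x y
    unfolding K_def using finite_fund_dom that by (intro Max_ge) auto
  have "positivity_index K"
    unfolding positivity_index_def
  proof (intro allI impI ballI)
    fix w :: "'x \<Rightarrow> real" and x
    assume w: "\<forall>u. 0 \<le> w u" "\<exists>y\<in>fund_dom. 0 < w y" and x: "x \<in> fund_dom"
    then obtain y where y: "y \<in> fund_dom" "0 < w y" by blast
    have "0 < (T ^^ k x y) w x" using k w y by blast
    also have "\<dots> \<le> (T ^^ K) w x"
      by (rule T_pow_mono) (use w k_le x y in auto)
    finally show "0 < (T ^^ K) w x" .
  qed
  then show ?thesis ..
qed

lemma continuous_on_T_pow_at: "continuous_on S (\<lambda>g. (T ^^ k) g x)"
proof -
  have cont_T: "continuous_on UNIV T"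
    by (rule continuous_on_coordinatewise_then_product)
      (auto simp: T_def intro!: continuous_intros continuous_on_product_coordinates)
  have "continuous_on UNIV (T ^^ k)"
  proof (induction k)
    case (Suc k)
    then have "continuous_on UNIV (T \<circ> (T ^^ k))"
      by (intro continuous_on_compose continuous_on_subset[OF cont_T]) auto
    then show ?case by simp
  qed (simp add: continuous_on_id)
  then show ?thesis
    by (rule continuous_on_subset[OF continuous_on_product_then_coordinatewise]) simp
qed

definition mult_simplex :: "real ^ 'd \<Rightarrow> ('x \<Rightarrow> real) set" where
  "mult_simplex \<alpha> = {g \<in> Mult \<alpha>. (\<forall>x. 0 \<le> g x) \<and> sum g fund_dom = 1}"

lemma closed_mult_simplex: "closed (mult_simplex \<alpha>)"
proof -
  have "mult_simplex \<alpha> = Mult \<alpha> \<inter> {g. \<forall>x. 0 \<le> g x} \<inter> {g. sum g fund_dom = 1}"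
    by (auto simp: mult_simplex_def)
  moreover have "closed {g :: 'x \<Rightarrow> real. \<forall>x. 0 \<le> g x}" "closed {g :: 'x \<Rightarrow> real. sum g fund_dom = 1}"
    by (intro closed_Collect_all closed_Collect_le closed_Collect_eq continuous_intros
        continuous_on_product_coordinates)+
  ultimately show ?thesis
    using closed_Mult by (metis closed_Int)
qed

lemma compact_mult_simplex: "compact (mult_simplex \<alpha>)"
proof -
  define box where "box = Pi\<^sub>E UNIV (\<lambda>x. {0 .. exp (pair_Zd \<alpha> (orbit_coord x))})"
  have "compactin (product_topology (\<lambda>i. euclidean) UNIV) box"
    unfolding box_def by (subst compactin_PiE) auto
  then have "compact box"
    by (simp add: euclidean_product_topology)
  moreover have "mult_simplex \<alpha> \<subseteq> box"
  proof
    fix g assume g: "g \<in> mult_simplex \<alpha>"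
    have "g x \<in> {0 .. exp (pair_Zd \<alpha> (orbit_coord x))}" for x
    proof -
      have "g (orbit_rep x) \<le> sum g fund_dom"
        using g finite_fund_dom orbit_rep_in_fund_dom
        by (intro member_le_sum) (auto simp: mult_simplex_def)
      then have "exp (pair_Zd \<alpha> (orbit_coord x)) * g (orbit_rep x) \<le> exp (pair_Zd \<alpha> (orbit_coord x))"
        using g by (simp add: mult_left_le mult_simplex_def)
      then show ?thesis
        using g Mult_orbit_rep[of g \<alpha> x] by (simp add: mult_simplex_def)
    qed
    then show "g \<in> box" by (auto simp: box_def)
  qed
  ultimately show ?thesis
    using compact_Int_closed[of box "mult_simplex \<alpha>"] closed_mult_simplex
    by (simp add: Int_absorb1)
qed

lemma normalize_in_mult_simplex:
  assumes "g \<in> Mult \<alpha>" "\<And>x. 0 \<le> g x" "0 < sum g fund_dom"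
  shows "(\<lambda>x. g x / sum g fund_dom) \<in> mult_simplex \<alpha>"
proof -
  have "(\<lambda>x. g x / sum g fund_dom) \<in> Mult \<alpha>"
    using Mult_scale[OF assms(1), of "1 / sum g fund_dom"] by simp
  moreover have "(\<Sum>x\<in>fund_dom. g x / sum g fund_dom) = 1"
    using assms(3) by (simp add: sum_divide_distrib[symmetric])
  ultimately show ?thesis
    using assms(2,3) by (simp add: mult_simplex_def)
qed

lemma mult_simplex_nonempty: "mult_simplex \<alpha> \<noteq> {}"
proof -
  define g where "g x = exp (pair_Zd \<alpha> (orbit_coord x))" for x
  have "g \<in> Mult \<alpha>"
    by (simp add: Mult_def g_def orbit_coord_act pair_Zd_add exp_add)
  moreover have "0 < sum g fund_dom"
    using finite_fund_dom fund_dom_nonempty by (simp add: g_def sum_pos)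
  ultimately show ?thesis
    using normalize_in_mult_simplex[of g] by (auto simp: g_def)
qed

lemma mult_simplex_pos_somewhere:
  assumes "g \<in> mult_simplex \<alpha>"
  shows "\<exists>y\<in>fund_dom. 0 < g y"
proof (rule ccontr)
  assume "\<not> (\<exists>y\<in>fund_dom. 0 < g y)"
  then have "sum g fund_dom \<le> 0" by (auto intro: sum_nonpos simp: not_less)
  then show False using assms by (simp add: mult_simplex_def)
qed

lemma T_pow_pos_on_mult_simplex:
  assumes K: "positivity_index K" and g: "g \<in> mult_simplex \<alpha>"
  shows "0 < (T ^^ K) g x"
proof (rule Mult_pos)
  show "(T ^^ K) g \<in> Mult \<alpha>"
    using g by (simp add: mult_simplex_def T_pow_Mult)
  obtain y0 where y0: "y0 \<in> fund_dom" "0 < g y0"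
    using mult_simplex_pos_somewhere[OF g] by blast
  show "0 < (T ^^ K) g y" if "y \<in> fund_dom" for y
    by (rule positivity_indexD[of K g, OF K _ y0 that]) (use g in \<open>simp add: mult_simplex_def\<close>)
qed

text \<open>The Collatz-Wielandt function, made continuous on the simplex by first applying the
  positivity improving power T^K.\<close>

definition cw :: "nat \<Rightarrow> ('x \<Rightarrow> real) \<Rightarrow> real" where
  "cw K g = Min ((\<lambda>x. (T ^^ Suc K) g x / (T ^^ K) g x) ` fund_dom)"

lemma continuous_on_cw:
  assumes "positivity_index K"
  shows "continuous_on (mult_simplex \<alpha>) (cw K)"
  unfolding cw_def
proof (rule continuous_on_Min_image[OF finite_fund_dom fund_dom_nonempty])
  fix x
  show "continuous_on (mult_simplex \<alpha>) (\<lambda>g. (T ^^ Suc K) g x / (T ^^ K) g x)"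
    using T_pow_pos_on_mult_simplex[OF assms]
    by (intro continuous_on_divide continuous_on_T_pow_at) (metis less_irrefl)
qed

lemma cw_le: "x \<in> fund_dom \<Longrightarrow> cw K g \<le> (T ^^ Suc K) g x / (T ^^ K) g x"
  unfolding cw_def by (rule Min_le) (use finite_fund_dom in auto)

lemma cw_scale: "0 < a \<Longrightarrow> cw K (\<lambda>x. a * g x) = cw K g"
  unfolding cw_def T_pow_scale by simp

lemma less_cw:
  assumes K: "positivity_index K" and nonneg: "\<And>x. 0 \<le> \<psi> x"
    and pos: "y0 \<in> fund_dom" "0 < \<psi> y0"
    and super: "\<And>x. r * \<psi> x \<le> T \<psi> x" and strict: "y \<in> fund_dom" "r * \<psi> y < T \<psi> y"
  shows "r < cw K \<psi>"
proof -
  have "r * (T ^^ K) \<psi> x < (T ^^ Suc K) \<psi> x" if x: "x \<in> fund_dom" for x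
  proof -
    have "0 < (T ^^ K) (\<lambda>x. 1 * T \<psi> x + (- r) * \<psi> x) x"
      by (rule positivity_indexD[OF K _ strict(1) _ x]) (use super strict(2) in auto)
    then show ?thesis
      unfolding T_pow_lincomb by (simp add: funpow_swap1)
  qed
  moreover have "0 < (T ^^ K) \<psi> x" if "x \<in> fund_dom" for x
    by (rule positivity_indexD[of K \<psi>, OF K nonneg pos that])
  ultimately show ?thesis
    unfolding cw_def using finite_fund_dom fund_dom_nonempty
    by (auto simp: Min_gr_iff pos_less_divide_eq)
qed

text \<open>Perron-Frobenius: a maximiser of the Collatz-Wielandt function is mapped by T^K to a
  positive eigenfunction.\<close>

lemma ex_T_eigenfunction: "\<exists>\<psi> r. \<psi> \<in> Mult \<alpha> \<and> (\<forall>x. 0 < \<psi> x) \<and> (\<forall>x. T \<psi> x = r * \<psi> x)"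
proof -
  obtain K where K: "positivity_index K"
    using ex_positivity_index by blast
  obtain g where g: "g \<in> mult_simplex \<alpha>" and g_max: "\<And>h. h \<in> mult_simplex \<alpha> \<Longrightarrow> cw K h \<le> cw K g"
    using continuous_attains_sup[OF compact_mult_simplex mult_simplex_nonempty continuous_on_cw[OF K]]
    by blast
  define \<psi> r where "\<psi> = (T ^^ K) g" and "r = cw K g"
  have \<psi>M: "\<psi> \<in> Mult \<alpha>"
    unfolding \<psi>_def by (rule T_pow_Mult) (use g in \<open>simp add: mult_simplex_def\<close>)
  have \<psi>_pos: "0 < \<psi> x" for x
    unfolding \<psi>_def by (rule T_pow_pos_on_mult_simplex[OF K g])
  have \<psi>_nonneg: "0 \<le> \<psi> x" for x
    using \<psi>_pos[of x] by simp
  define w where "w x = T \<psi> x - r * \<psi> x" for x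
  have wM: "w \<in> Mult \<alpha>"
    using Mult_lincomb[OF T_Mult[OF \<psi>M] \<psi>M, of 1 "- r"] by (simp add: w_def[abs_def])
  have r_le: "r * \<psi> x \<le> T \<psi> x" if "x \<in> fund_dom" for x
  proof -
    have "T \<psi> = (T ^^ Suc K) g"
      by (simp add: \<psi>_def)
    then have "r \<le> T \<psi> x / \<psi> x"
      using cw_le[OF that, of K g] by (simp add: r_def \<psi>_def)
    then show ?thesis
      using \<psi>_pos[of x] by (simp add: pos_le_divide_eq)
  qed
  have w_nonneg: "0 \<le> w x" for x
  proof (rule Mult_nonneg[OF wM])
    show "0 \<le> w y" if "y \<in> fund_dom" for y
      using r_le[OF that] by (simp add: w_def)
  qed
  have "w x = 0" for x
  proof (rule Mult_zero[OF wM], rule ccontr)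
    fix y assume y: "y \<in> fund_dom" "w y \<noteq> 0"
    define s where "s = sum \<psi> fund_dom"
    have s_pos: "0 < s"
      unfolding s_def using finite_fund_dom fund_dom_nonempty \<psi>_pos by (simp add: sum_pos)
    have "r < cw K \<psi>"
    proof (rule less_cw[of K \<psi> y r y, OF K \<psi>_nonneg y(1) \<psi>_pos _ y(1)])
      show "r * \<psi> x \<le> T \<psi> x" for x
        using w_nonneg[of x] by (simp add: w_def)
      show "r * \<psi> y < T \<psi> y"
        using w_nonneg[of y] y(2) by (simp add: w_def)
    qed
    also have "\<dots> = cw K (\<lambda>x. (1 / s) * \<psi> x)"
      using s_pos by (intro cw_scale[symmetric]) simp
    also have "\<dots> \<le> r"
      unfolding r_def using normalize_in_mult_simplex[OF \<psi>M \<psi>_nonneg] s_pos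
      by (intro g_max) (simp add: s_def)
    finally show False by simp
  qed
  then show ?thesis
    using \<psi>M \<psi>_pos by (auto simp: w_def)
qed

section \<open>Strict concavity of the eigenvalue\<close>

lemma Mult_geometric_mean:
  assumes "fa \<in> Mult \<alpha>" "fb \<in> Mult \<beta>" "\<And>x. 0 < fa x" "\<And>x. 0 < fb x"
  shows "(\<lambda>x. fa x powr (1 - t) * fb x powr t) \<in> Mult ((1 - t) *\<^sub>R \<alpha> + t *\<^sub>R \<beta>)"
  unfolding Mult_def
proof (intro CollectI allI)
  fix z x
  have "fa (act z x) = exp (pair_Zd \<alpha> z) * fa x" "fb (act z x) = exp (pair_Zd \<beta> z) * fb x"
    using assms(1,2) by (simp_all add: Mult_def)
  then have "fa (act z x) powr (1 - t) * fb (act z x) powr t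
      = (exp (pair_Zd \<alpha> z) powr (1 - t) * exp (pair_Zd \<beta> z) powr t) * (fa x powr (1 - t) * fb x powr t)"
    using assms(3,4)[of x] by (simp add: powr_mult algebra_simps)
  also have "exp (pair_Zd \<alpha> z) powr (1 - t) * exp (pair_Zd \<beta> z) powr t
      = exp ((1 - t) * pair_Zd \<alpha> z + t * pair_Zd \<beta> z)"
    by (simp add: powr_def mult_exp_exp algebra_simps)
  also have "\<dots> = exp (pair_Zd ((1 - t) *\<^sub>R \<alpha> + t *\<^sub>R \<beta>) z)"
    by (simp only: pair_Zd_convex_comb)
  finally show "fa (act z x) powr (1 - t) * fb (act z x) powr t
      = exp (pair_Zd ((1 - t) *\<^sub>R \<alpha> + t *\<^sub>R \<beta>) z) * (fa x powr (1 - t) * fb x powr t)" .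
qed

text \<open>Weighted AM-GM applied edge by edge: with the neighbour ratios A = fa y / fa x and
  B = fb y / fb x one has g y = g x A^(1-t) B^t \<le> g x ((1-t) A + t B), and summing against b
  reproduces the eigenvalue equations of fa and fb.\<close>

lemma geometric_mean_supersolution:
  fixes t :: real
  assumes fa_pos: "\<And>x. 0 < fa x" and fa_eigen: "\<And>x. opH b c fa x = La * fa x"
    and fb_pos: "\<And>x. 0 < fb x" and fb_eigen: "\<And>x. opH b c fb x = Lb * fb x"
    and t: "0 < t" "t < 1"
  defines "g \<equiv> \<lambda>x. fa x powr (1 - t) * fb x powr t"
    and "\<mu> \<equiv> (1 - t) * La + t * Lb"
  shows "\<mu> * g x \<le> opH b c g x"
    and "y \<in> nbrs x \<Longrightarrow> fa y / fa x \<noteq> fb y / fb x \<Longrightarrow> \<mu> * g x < opH b c g x"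
proof -
  define bound where "bound y = g x * ((1 - t) * (fa y / fa x) + t * (fb y / fb x))" for y
  have g_ratio: "g y = g x * ((fa y / fa x) powr (1 - t) * (fb y / fb x) powr t)" for y
    using fa_pos[of x] fa_pos[of y] fb_pos[of x] fb_pos[of y]
    by (simp add: g_def powr_divide)
  have g_pos: "0 < g x"
    using fa_pos[of x] fb_pos[of x] by (simp add: g_def)
  have g_le: "g y \<le> bound y" for y
  proof -
    have "(fa y / fa x) powr (1 - t) * (fb y / fb x) powr t \<le> (1 - t) * (fa y / fa x) + t * (fb y / fb x)"
      by (rule Youngs_inequality_0) (use t fa_pos fb_pos in auto)
    then show ?thesis
      unfolding g_ratio[of y] bound_def using g_pos by (simp add: mult_left_mono)
  qed
  have g_less: "g y < bound y" if "fa y / fa x \<noteq> fb y / fb x" for y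
  proof -
    have "(fa y / fa x) powr (1 - t) * (fb y / fb x) powr t < (1 - t) * (fa y / fa x) + t * (fb y / fb x)"
      by (rule powr_convex_comb_less) (use t fa_pos fb_pos that in auto)
    then show ?thesis
      unfolding g_ratio[of y] bound_def using g_pos by simp
  qed
  have "(\<Sum>y\<in>nbrs x. b x y * bound y)
      = g x * (1 - t) / fa x * (\<Sum>y\<in>nbrs x. b x y * fa y) + g x * t / fb x * (\<Sum>y\<in>nbrs x. b x y * fb y)"
    by (simp add: bound_def sum.distrib sum_distrib_left algebra_simps)
  also have "\<dots> = (diag x - \<mu>) * g x"
    unfolding sum_nbrs_eigen[OF fa_eigen] sum_nbrs_eigen[OF fb_eigen] \<mu>_def
    using fa_pos[of x] fb_pos[of x] by (simp add: field_simps)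
  finally have sum_bound: "\<mu> * g x = opH b c g x + ((\<Sum>y\<in>nbrs x. b x y * g y) - (\<Sum>y\<in>nbrs x. b x y * bound y))"
    by (simp add: opH_eq algebra_simps)
  have "(\<Sum>y\<in>nbrs x. b x y * g y) \<le> (\<Sum>y\<in>nbrs x. b x y * bound y)"
    by (intro sum_mono mult_left_mono g_le b_nonneg)
  then show "\<mu> * g x \<le> opH b c g x"
    unfolding sum_bound by simp
  assume "y \<in> nbrs x" "fa y / fa x \<noteq> fb y / fb x"
  then have "(\<Sum>y\<in>nbrs x. b x y * g y) < (\<Sum>y\<in>nbrs x. b x y * bound y)"
    by (intro sum_strict_mono_ex1 finite_nbrs ballI mult_left_mono g_le b_nonneg bexI[of _ y]
        mult_strict_left_mono g_less) (auto simp: nbrs_def)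
  then show "\<mu> * g x < opH b c g x"
    unfolding sum_bound by simp
qed

lemma Mult_proportional_imp_eq:
  assumes "fa \<in> Mult \<alpha>" "fb \<in> Mult \<beta>" "\<And>x. fa x = k * fb x" "fa x0 \<noteq> 0"
  shows "\<alpha> = \<beta>"
proof (rule pair_Zd_inject)
  fix z
  have "exp (pair_Zd \<alpha> z) * fa x0 = fa (act z x0)"
    using assms(1) by (simp add: Mult_def)
  also have "\<dots> = exp (pair_Zd \<beta> z) * fa x0"
    using assms(2) by (simp add: assms(3) Mult_def)
  finally show "pair_Zd \<alpha> z = pair_Zd \<beta> z"
    using assms(4) by simp
qed

lemma Mult_eigenvalue_strictly_concave:
  assumes fa: "fa \<in> Mult \<alpha>" "\<And>x. 0 < fa x" "\<And>x. opH b c fa x = La * fa x"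
    and fb: "fb \<in> Mult \<beta>" "\<And>x. 0 < fb x" "\<And>x. opH b c fb x = Lb * fb x"
    and fg: "fg \<in> Mult ((1 - t) *\<^sub>R \<alpha> + t *\<^sub>R \<beta>)" "\<And>x. 0 < fg x" "\<And>x. opH b c fg x = Lg * fg x"
    and "\<alpha> \<noteq> \<beta>" and t: "0 < t" "t < 1"
  shows "(1 - t) * La + t * Lb < Lg"
proof -
  define g where "g x = fa x powr (1 - t) * fb x powr t" for x
  define \<mu> where "\<mu> = (1 - t) * La + t * Lb"
  have g_super: "\<mu> * g x \<le> opH b c g x" for x
    unfolding g_def \<mu>_def by (rule geometric_mean_supersolution(1)[OF fa(2,3) fb(2,3) t])
  have gM: "g \<in> Mult ((1 - t) *\<^sub>R \<alpha> + t *\<^sub>R \<beta>)"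
    unfolding g_def[abs_def] by (rule Mult_geometric_mean[OF fa(1) fb(1) fa(2) fb(2)])
  have g_pos: "0 < g x" for x
    using fa(2)[of x] fb(2)[of x] by (simp add: g_def)
  note compare = Mult_supersolution_le_eigenvalue[OF fg(1) gM fg(2) g_pos fg(3) g_super]
  show ?thesis
  proof (rule ccontr)
    assume "\<not> (1 - t) * La + t * Lb < Lg"
    then have "\<mu> = Lg" using compare(1) by (simp add: \<mu>_def)
    have same_ratio: "fa v / fa u = fb v / fb u" if "v \<in> nbrs u" for u v
      using geometric_mean_supersolution(2)[OF fa(2,3) fb(2,3) t that] compare(2)[OF \<open>\<mu> = Lg\<close>, of u]
      unfolding g_def[abs_def] \<mu>_def by fastforce
    define k where "k = fa x0 / fb x0"
    have "0 < k"
      using fa(2)[of x0] fb(2)[of x0] by (simp add: k_def)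
    have "fa y = k * fb y" for y
    proof (rule connected_induct[of "\<lambda>u. fa u = k * fb u" x0])
      show "fa x0 = k * fb x0"
        using fb(2)[of x0] by (simp add: k_def)
      fix u v assume "fa u = k * fb u" "v \<in> nbrs u"
      then show "fa v = k * fb v"
        using same_ratio[of v u] \<open>0 < k\<close> fb(2)[of u] fb(2)[of v] by (simp add: field_simps)
    qed
    then have "\<alpha> = \<beta>"
      by (rule Mult_proportional_imp_eq[OF fa(1) fb(1)]) (use fa(2)[of x0] in simp)
    then show False using \<open>\<alpha> \<noteq> \<beta>\<close> by simp
  qed
qed

section \<open>The cone K and the map \<Lambda>\<close>

lemma Kset_eigenfunction:
  assumes "f \<in> Kset b c x0 lam"
  shows "\<And>x. 0 \<le> f x" and "f x0 = 1" and "\<And>x. opH b c f x = lam * f x"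
proof -
  define C where "C = {f :: 'x \<Rightarrow> real. (\<forall>x. 0 \<le> f x) \<and> f x0 = 1 \<and>
      (\<forall>x. diag x * f x - (\<Sum>y\<in>nbrs x. b x y * f y) = lam * f x)}"
  have "closed C"
    unfolding C_def
    by (intro closed_Collect_conj closed_Collect_all closed_Collect_le closed_Collect_eq
        continuous_intros continuous_on_product_coordinates)
  moreover have "{f. (\<forall>x. f x \<ge> 0) \<and> f \<noteq> (\<lambda>_. 0) \<and> harmonic b c lam f \<and> f x0 = 1} \<subseteq> C"
    by (auto simp: C_def harmonic_def opH_eq)
  ultimately have "Kset b c x0 lam \<subseteq> C"
    unfolding Kset_def by (rule closure_minimal[rotated])
  then show "\<And>x. 0 \<le> f x" and "f x0 = 1" and "\<And>x. opH b c f x = lam * f x"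
    using assms by (auto simp: C_def opH_eq)
qed

lemma eigenfunction_in_Kset:
  assumes "\<And>x. 0 \<le> f x" "f x0 = 1" "\<And>x. opH b c f x = lam * f x"
  shows "f \<in> Kset b c x0 lam"
proof -
  have "f \<noteq> (\<lambda>_. 0)"
    using assms(2) by auto
  then have "f \<in> {f. (\<forall>x. f x \<ge> 0) \<and> f \<noteq> (\<lambda>_. 0) \<and> harmonic b c lam f \<and> f x0 = 1}"
    using assms by (simp add: harmonic_def in_domH)
  then show ?thesis
    unfolding Kset_def by (rule subsetD[OF closure_subset])
qed

lemma char_of_eq: "mult_with act \<gamma> f \<Longrightarrow> f x0 = 1 \<Longrightarrow> char_of act f = \<gamma>"
  unfolding char_of_def by (rule the_equality) (auto simp: mult_with_def fun_eq_iff)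

lemma rho_eqI: "(\<And>z. ln (char_of act f z) = pair_Zd \<alpha> z) \<Longrightarrow> rho act f = \<alpha>"
  unfolding rho_def by (rule the_equality) (auto intro: pair_Zd_inject)

lemma mult_with_Mult: "f \<in> Mult \<alpha> \<Longrightarrow> mult_with act (\<lambda>z. exp (pair_Zd \<alpha> z)) f"
  by (simp add: mult_with_def is_character_def Mult_def pair_Zd_add exp_add)

lemma Mset_imp_Mult:
  assumes "f \<in> Mset b c act x0 lam"
  shows "f \<in> Mult (rho act f)" and "\<And>x. 0 < f x" and "\<And>x. opH b c f x = lam * f x"
proof -
  have K: "f \<in> Kset b c x0 lam"
    using assms by (simp add: Mset_def)
  obtain \<gamma> where \<gamma>: "mult_with act \<gamma> f"
    using assms by (auto simp: Mset_def multiplicative_def)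
  then have "is_character \<gamma>"
    by (simp add: mult_with_def)
  then obtain \<alpha> where \<alpha>: "\<And>z. ln (\<gamma> z) = pair_Zd \<alpha> z"
    using character_ln_eq_pair_Zd by blast
  have "char_of act f = \<gamma>"
    using char_of_eq[OF \<gamma> Kset_eigenfunction(2)[OF K]] .
  then have "rho act f = \<alpha>"
    by (intro rho_eqI) (simp add: \<alpha>)
  moreover have "\<gamma> z = exp (pair_Zd \<alpha> z)" for z
    using \<gamma> \<alpha>[of z] by (metis exp_ln is_character_def mult_with_def)
  ultimately show "f \<in> Mult (rho act f)"
    using \<gamma> by (simp add: Mult_def mult_with_def)
  show "\<And>x. opH b c f x = lam * f x"
    by (rule Kset_eigenfunction(3)[OF K])
  then show "\<And>x. 0 < f x"
    using nonneg_eigenfunction_pos Kset_eigenfunction(1,2)[OF K] by blast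
qed

lemma Lam_eqI:
  assumes gM: "g \<in> Mult \<alpha>" and g_pos: "\<And>x. 0 < g x" and g_eigen: "\<And>x. opH b c g x = L * g x"
  shows "Lam b c act x0 \<alpha> = L"
  unfolding Lam_def
proof (rule the_equality)
  define f where "f x = g x / g x0" for x
  have fM: "f \<in> Mult \<alpha>"
    using Mult_scale[OF gM, of "1 / g x0"] by (simp add: f_def[abs_def])
  have f1: "f x0 = 1"
    using g_pos[of x0] by (simp add: f_def)
  have "opH b c f x = L * f x" for x
    using opH_lincomb[of "1 / g x0" g 0 g x] g_eigen[of x] by (simp add: f_def[abs_def])
  then have "f \<in> Kset b c x0 L"
    using g_pos g_pos[of x0] f1 by (intro eigenfunction_in_Kset) (auto simp: f_def less_imp_le)
  then have "f \<in> Mset b c act x0 L"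
    using mult_with_Mult[OF fM] by (auto simp: Mset_def multiplicative_def)
  moreover have "rho act f = \<alpha>"
    by (rule rho_eqI) (simp add: char_of_eq[OF mult_with_Mult[OF fM] f1])
  ultimately show "\<exists>f\<in>Mset b c act x0 L. rho act f = \<alpha>" by blast
next
  fix lam assume "\<exists>f\<in>Mset b c act x0 lam. rho act f = \<alpha>"
  then obtain f where f: "f \<in> Mset b c act x0 lam" "rho act f = \<alpha>" by blast
  have fM: "f \<in> Mult \<alpha>"
    using Mset_imp_Mult(1)[OF f(1)] f(2) by simp
  have "lam \<le> L"
    by (rule Mult_supersolution_le_eigenvalue(1)[OF gM fM g_pos Mset_imp_Mult(2)[OF f(1)] g_eigen])
      (simp add: Mset_imp_Mult(3)[OF f(1)])
  moreover have "L \<le> lam"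
    by (rule Mult_supersolution_le_eigenvalue(1)[OF fM gM Mset_imp_Mult(2)[OF f(1)] g_pos
          Mset_imp_Mult(3)[OF f(1)]]) (simp add: g_eigen)
  ultimately show "lam = L" by simp
qed

lemma ex_Mult_eigenfunction: "\<exists>g L. g \<in> Mult \<alpha> \<and> (\<forall>x. 0 < g x) \<and> (\<forall>x. opH b c g x = L * g x)"
proof -
  obtain g r where "g \<in> Mult \<alpha>" "\<forall>x. 0 < g x" "\<forall>x. T g x = r * g x"
    using ex_T_eigenfunction by blast
  then show ?thesis
    by (metis opH_eq_shift_minus_T left_diff_distrib)
qed

lemma Lam_strictly_concave: "strictly_concave_on UNIV (Lam b c act x0)"
  unfolding strictly_concave_on_def
proof (intro ballI allI impI, elim conjE)
  fix \<alpha> \<beta> :: "real ^ 'd" and t :: real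
  assume "\<alpha> \<noteq> \<beta>" "0 < t" "t < 1"
  obtain fa La where a: "fa \<in> Mult \<alpha>" "\<forall>x. 0 < fa x" "\<forall>x. opH b c fa x = La * fa x"
    using ex_Mult_eigenfunction by blast
  obtain fb Lb where b: "fb \<in> Mult \<beta>" "\<forall>x. 0 < fb x" "\<forall>x. opH b c fb x = Lb * fb x"
    using ex_Mult_eigenfunction by blast
  obtain fg Lg where g: "fg \<in> Mult ((1 - t) *\<^sub>R \<alpha> + t *\<^sub>R \<beta>)" "\<forall>x. 0 < fg x" "\<forall>x. opH b c fg x = Lg * fg x"
    using ex_Mult_eigenfunction by blast
  have "(1 - t) * La + t * Lb < Lg"
    using Mult_eigenvalue_strictly_concave[of fa \<alpha> La fb \<beta> Lb fg t Lg] a b g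
      \<open>\<alpha> \<noteq> \<beta>\<close> \<open>0 < t\<close> \<open>t < 1\<close> by blast
  then show "(1 - t) * Lam b c act x0 \<alpha> + t * Lam b c act x0 \<beta> < Lam b c act x0 ((1 - t) *\<^sub>R \<alpha> + t *\<^sub>R \<beta>)"
    using Lam_eqI[of fa \<alpha> La] Lam_eqI[of fb \<beta> Lb] Lam_eqI[of fg _ Lg] a b g by simp
qed

end

theorem lemma13:
  fixes b :: "'x::countable \<Rightarrow> 'x \<Rightarrow> real" and c :: "'x \<Rightarrow> real"
    and act :: "int ^ 'd \<Rightarrow> 'x \<Rightarrow> 'x" and x0 :: 'x
  assumes "graph b" and "locally_finite b" and "graph_connected b"
    and "group_action act" and "free_action act" and "cocompact_action act"
    and "H_invariant b c act"
  shows "strictly_concave_on UNIV (Lam b c act x0) \<and> continuous_on UNIV (Lam b c act x0)"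
proof -
  interpret periodic_graph b c act x0
    using assms by unfold_locales
  show ?thesis
    using Lam_strictly_concave strictly_concave_on_imp_continuous by blast
qed

end
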